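(* Let $d\ge 1$ and $n\ge1$ be integers, and let $g$ be a real form of degree $2n$ in $d$ variables with $g(\mathbf{x})\ge0$ for all $\mathbf{x}\in\mathbb{R}^d$ and $g(\mathbf{x})=0$ only if $\mathbf{x}=0$. Let $d\mu=\exp(-g(\mathbf{x}))\,d\mathbf{x}$ on $\mathbb{R}^d$ and $Z(g):=\int_{\mathbb{R}^d}\exp(-g(\mathbf{x}))\,d\mathbf{x}$. Let $\{P_{\boldsymbol{\alpha}}:\boldsymbol{\alpha}\in\mathbb{N}^d_{2n}\}$ be any basis of the space of degree-$2n$ forms that is orthonormal in $L^2(\mu)$, $\mathbb{P}_{2n}(\mathbf{x}):=(P_{\boldsymbol{\alpha}}(\mathbf{x}))_{\boldsymbol{\alpha}}$, $\tilde{\mathbf{g}}$ the coefficient vector of $g$ in this basis (so $g=\langle\tilde{\mathbf{g}},\mathbb{P}_{2n}\rangle$), and $\tilde{\boldsymbol{\mu}}^{(2n)}:=\int\mathbb{P}_{2n}\,d\mu$. Then \[Z(g)=\frac{4n^2}{d\,(d+2n)}\,\|\tilde{\mathbf{g}}\|^2=\frac{d+2n}{d}\,\|\tilde{\boldsymbol{\mu}}^{(2n)}\|^2,\] where $\|\cdot\|$ is the Euclidean norm.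
   Context: $\mathbb{N}^d_{2n}=\{\boldsymbol{\alpha}\in\mathbb{N}^d:\sum_i\alpha_i=2n\}$; the degree-$2n$ forms in $d$ variables form a vector space with basis indexed by $\mathbb{N}^d_{2n}$. *)

theory Defs
  imports "HOL-Analysis.Analysis"
begin

text \<open>Multi-indices alpha in N^d with |alpha| = k; the index type 'd (finite) has CARD('d) = d.\<close>
definition exps :: "nat \<Rightarrow> ('d::finite \<Rightarrow> nat) set" where
  "exps k = {\<alpha>. (\<Sum>i\<in>UNIV. \<alpha> i) = k}"

definition monomial_fn :: "('d::finite \<Rightarrow> nat) \<Rightarrow> real^'d \<Rightarrow> real" where
  "monomial_fn \<alpha> x = (\<Prod>i\<in>UNIV. (x $ i) ^ \<alpha> i)"

definition is_form :: "nat \<Rightarrow> (real^'d::finite \<Rightarrow> real) \<Rightarrow> bool" where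
  "is_form k f \<longleftrightarrow> (\<exists>c. f = (\<lambda>x. \<Sum>\<alpha>\<in>exps k. c \<alpha> * monomial_fn \<alpha> x))"

definition Zg :: "(real^'d::finite \<Rightarrow> real) \<Rightarrow> real" where
  "Zg g = (\<integral>x. exp (- g x) \<partial>lborel)"

definition L2_inner :: "(real^'d::finite \<Rightarrow> real) \<Rightarrow> (real^'d \<Rightarrow> real) \<Rightarrow> (real^'d \<Rightarrow> real) \<Rightarrow> real" where
  "L2_inner g p q = (\<integral>x. p x * q x * exp (- g x) \<partial>lborel)"

definition orthonormal_form_basis ::
  "nat \<Rightarrow> (real^'d::finite \<Rightarrow> real) \<Rightarrow> (('d \<Rightarrow> nat) \<Rightarrow> real^'d \<Rightarrow> real) \<Rightarrow> bool" where
  "orthonormal_form_basis k g P \<longleftrightarrow>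
     (\<forall>\<alpha>\<in>exps k. is_form k (P \<alpha>)) \<and>
     (\<forall>f. is_form k f \<longrightarrow> (\<exists>c. f = (\<lambda>x. \<Sum>\<alpha>\<in>exps k. c \<alpha> * P \<alpha> x))) \<and>
     (\<forall>\<alpha>\<in>exps k. integrable lborel (\<lambda>x. (P \<alpha> x)\<^sup>2 * exp (- g x))) \<and>
     (\<forall>\<alpha>\<in>exps k. \<forall>\<beta>\<in>exps k. L2_inner g (P \<alpha>) (P \<beta>) = (if \<alpha> = \<beta> then 1 else 0))"

end

(* If g is positively homogeneous of degree p and positive off the origin, and h is positively
   homogeneous of degree k, then the integrated Euler identity
     int h g e^(-g) dx = (d + k)/p * int h e^(-g) dx
   holds. Indeed e^(-g(x)) = int_1^oo g(x) e^(-t g(x)) dt; after exchanging the integrals, the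
   substitution x -> t^(-1/p) x turns the inner integral into t^(-(d+k)/p - 1) int h g e^(-g) dx,
   and int_1^oo t^(-a-1) dt = 1/a.
   For p = 2n, taking h = 1 and h = g gives int g^2 dmu = d (d + 2n) / (4 n^2) Z(g), while
   int g^2 dmu = |g~|^2 by Parseval. Taking h = P_alpha, for which int P_alpha g dmu = g~_alpha,
   gives mu~_alpha = 2n / (d + 2n) g~_alpha. *)

theory Submission
  imports Defs "HOL-Real_Asymp.Real_Asymp"
begin

definition pos_homogeneous :: "nat \<Rightarrow> ('a::real_vector \<Rightarrow> real) \<Rightarrow> bool" where
  "pos_homogeneous k f \<longleftrightarrow> (\<forall>c>0. \<forall>x. f (c *\<^sub>R x) = c ^ k * f x)"

lemma pos_homogeneousD: "pos_homogeneous k f \<Longrightarrow> c > 0 \<Longrightarrow> f (c *\<^sub>R x) = c ^ k * f x"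
  unfolding pos_homogeneous_def by blast

lemma pos_homogeneous_const: "pos_homogeneous 0 (\<lambda>_. a)"
  unfolding pos_homogeneous_def by simp

lemma pos_homogeneous_mult:
  "pos_homogeneous k f \<Longrightarrow> pos_homogeneous m h \<Longrightarrow> pos_homogeneous (k + m) (\<lambda>x. f x * h x)"
  unfolding pos_homogeneous_def by (simp add: power_add mult_ac)

lemma pos_homogeneous_abs: "pos_homogeneous k f \<Longrightarrow> pos_homogeneous k (\<lambda>x. \<bar>f x\<bar>)"
  unfolding pos_homogeneous_def by (simp add: abs_mult)

lemma pos_homogeneous_max_0: "pos_homogeneous k f \<Longrightarrow> pos_homogeneous k (\<lambda>x. max (f x) 0)"
  unfolding pos_homogeneous_def by (auto simp: max_def mult_le_0_iff dest: zero_less_power[of _ k])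

lemma pos_homogeneous_uminus: "pos_homogeneous k f \<Longrightarrow> pos_homogeneous k (\<lambda>x. - f x)"
  unfolding pos_homogeneous_def by simp

lemma pos_homogeneous_at_0:
  assumes "pos_homogeneous k f" "k > 0"
  shows "f 0 = 0"
proof -
  have "(1::real) < 2 ^ k"
    using \<open>k > 0\<close> by (intro one_less_power) auto
  then show ?thesis
    using pos_homogeneousD[OF assms(1), of 2 0] by simp
qed

lemma finite_exps: "finite (exps k :: ('d::finite \<Rightarrow> nat) set)"
proof (rule finite_subset)
  show "exps k \<subseteq> {\<alpha>::'d \<Rightarrow> nat. \<forall>i. \<alpha> i \<in> {..k}}"
  proof
    fix \<alpha> :: "'d \<Rightarrow> nat"
    assume "\<alpha> \<in> exps k"
    then have "\<alpha> i \<le> k" for i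
      unfolding exps_def using member_le_sum[of i UNIV \<alpha>] by auto
    then show "\<alpha> \<in> {\<alpha>. \<forall>i. \<alpha> i \<in> {..k}}" by auto
  qed
  show "finite {\<alpha>::'d \<Rightarrow> nat. \<forall>i. \<alpha> i \<in> {..k}}"
    using finite_PiE[of "UNIV::'d set" "\<lambda>_. {..k}"] by (simp add: PiE_def Pi_def extensional_def)
qed

lemma monomial_fn_scaleR: "monomial_fn \<alpha> (c *\<^sub>R x) = c ^ (\<Sum>i\<in>UNIV. \<alpha> i) * monomial_fn \<alpha> x"
  unfolding monomial_fn_def by (simp add: power_mult_distrib prod.distrib power_sum)

lemma is_form_pos_homogeneous: "is_form k f \<Longrightarrow> pos_homogeneous k f"
  unfolding is_form_def pos_homogeneous_def
  by (auto simp: monomial_fn_scaleR exps_def sum_distrib_left algebra_simps)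

lemma is_form_borel_measurable: "is_form k f \<Longrightarrow> f \<in> borel_measurable borel"
  unfolding is_form_def monomial_fn_def by auto

lemma nn_integral_lborel_scaleR:
  fixes f :: "'a::euclidean_space \<Rightarrow> ennreal"
  assumes "f \<in> borel_measurable borel" "c > 0"
  shows "(\<integral>\<^sup>+x. f x \<partial>lborel) = ennreal (c ^ DIM('a)) * (\<integral>\<^sup>+x. f (c *\<^sub>R x) \<partial>lborel)"
proof -
  have "(\<integral>\<^sup>+x. f x \<partial>lborel)
      = (\<integral>\<^sup>+x. f x \<partial>density (distr lborel borel (\<lambda>x. 0 + c *\<^sub>R x)) (\<lambda>_. \<bar>c\<bar> ^ DIM('a)))"
    using lborel_affine[of c "0::'a"] assms by simp
  also have "\<dots> = (\<integral>\<^sup>+x. ennreal (c ^ DIM('a)) * f (c *\<^sub>R x) \<partial>lborel)"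
    using assms by (subst nn_integral_density) (auto simp: nn_integral_distr)
  also have "\<dots> = ennreal (c ^ DIM('a)) * (\<integral>\<^sup>+x. f (c *\<^sub>R x) \<partial>lborel)"
    using assms by (subst nn_integral_cmult) auto
  finally show ?thesis .
qed

lemma nn_integral_exp_tail:
  assumes "(c::real) \<ge> 0" "(b::real) > 0"
  shows "(\<integral>\<^sup>+t. ennreal (c * b * exp (- t * b)) * indicator {1..} t \<partial>lborel) = ennreal (c * exp (- b))"
proof -
  have "(\<integral>\<^sup>+t. ennreal (c * b * exp (- t * b)) * indicator {1..} t \<partial>lborel)
      = ennreal (0 - (- c * exp (- 1 * b)))"
  proof (rule nn_integral_FTC_atLeast[where F="\<lambda>t. - c * exp (- t * b)"])
    show "((\<lambda>t. - c * exp (- t * b)) has_real_derivative c * b * exp (- t * b)) (at t)" for t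
      by (auto intro!: derivative_eq_intros)
    show "((\<lambda>t. - c * exp (- t * b)) \<longlongrightarrow> 0) at_top"
      using assms by real_asymp
  qed (use assms in auto)
  then show ?thesis by simp
qed

lemma nn_integral_powr_tail:
  assumes "(a::real) > 0"
  shows "(\<integral>\<^sup>+t. ennreal (t powr (- a - 1)) * indicator {1..} t \<partial>lborel) = ennreal (1 / a)"
proof -
  have "(\<integral>\<^sup>+t. ennreal (t powr (- a - 1)) * indicator {1..} t \<partial>lborel) = ennreal (0 - (- (1 powr (- a)) / a))"
  proof (rule nn_integral_FTC_atLeast[where F="\<lambda>t. - (t powr (- a)) / a"])
    show "((\<lambda>t. - (t powr (- a)) / a) has_real_derivative t powr (- a - 1)) (at t)" if "1 \<le> t" for t
      using that assms by (auto intro!: derivative_eq_intros simp: field_simps powr_diff)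
    show "((\<lambda>t. - (t powr (- a)) / a) \<longlongrightarrow> 0) at_top"
      using assms by real_asymp
  qed auto
  then show ?thesis by simp
qed

locale homogeneous_potential =
  fixes g :: "'a::euclidean_space \<Rightarrow> real" and p :: nat
  assumes degree_pos: "p > 0"
    and borel_measurable_g [measurable]: "g \<in> borel_measurable borel"
    and homogeneous: "pos_homogeneous p g"
    and positive: "x \<noteq> 0 \<Longrightarrow> g x > 0"
begin

lemma nonneg: "g x \<ge> 0"
  using positive[of x] pos_homogeneous_at_0[OF homogeneous degree_pos] by (cases "x = 0") auto

lemma nn_integral_exp_scaled:
  fixes F :: "'a \<Rightarrow> real"
  assumes [measurable]: "F \<in> borel_measurable borel" and F: "pos_homogeneous m F" and "t > 0"
  shows "(\<integral>\<^sup>+x. ennreal (F x * exp (- t * g x)) \<partial>lborel)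
       = ennreal (t powr (- (real DIM('a) + real m) / p)) * (\<integral>\<^sup>+x. ennreal (F x * exp (- g x)) \<partial>lborel)"
proof -
  define s where "s = t powr (- 1 / p)"
  have s: "s > 0" using \<open>t > 0\<close> by (simp add: s_def)
  have s_pow: "s ^ j = t powr (- real j / p)" for j
    using \<open>t > 0\<close> by (simp add: s_def powr_realpow[symmetric] powr_powr)
  have t_s: "t * s ^ p = 1"
    using \<open>t > 0\<close> degree_pos by (simp add: s_pow powr_minus field_simps)
  have "(\<integral>\<^sup>+x. ennreal (F x * exp (- t * g x)) \<partial>lborel)
      = ennreal (s ^ DIM('a)) * (\<integral>\<^sup>+x. ennreal (F (s *\<^sub>R x) * exp (- t * g (s *\<^sub>R x))) \<partial>lborel)"
    using s by (intro nn_integral_lborel_scaleR) auto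
  also have "(\<lambda>x. ennreal (F (s *\<^sub>R x) * exp (- t * g (s *\<^sub>R x))))
      = (\<lambda>x. ennreal (s ^ m) * ennreal (F x * exp (- g x)))"
    using s t_s by (simp add: pos_homogeneousD[OF F] pos_homogeneousD[OF homogeneous]
        ennreal_mult'[symmetric] mult.assoc[symmetric])
  also have "(\<integral>\<^sup>+x. ennreal (s ^ m) * ennreal (F x * exp (- g x)) \<partial>lborel)
      = ennreal (s ^ m) * (\<integral>\<^sup>+x. ennreal (F x * exp (- g x)) \<partial>lborel)"
    by (rule nn_integral_cmult) auto
  also have "ennreal (s ^ DIM('a)) * (ennreal (s ^ m) * (\<integral>\<^sup>+x. ennreal (F x * exp (- g x)) \<partial>lborel))
      = ennreal (s ^ (DIM('a) + m)) * (\<integral>\<^sup>+x. ennreal (F x * exp (- g x)) \<partial>lborel)"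
    using s by (simp add: mult.assoc[symmetric] ennreal_mult[symmetric] power_add)
  also have "s ^ (DIM('a) + m) = t powr (- (real DIM('a) + real m) / p)"
    by (simp add: s_pow)
  finally show ?thesis .
qed

lemma nn_integral_euler:
  fixes h :: "'a \<Rightarrow> real"
  assumes [measurable]: "h \<in> borel_measurable borel"
    and h: "pos_homogeneous k h" and h_nonneg: "\<And>x. h x \<ge> 0"
  shows "(\<integral>\<^sup>+x. ennreal (h x * g x * exp (- g x)) \<partial>lborel)
       = ennreal ((real DIM('a) + real k) / p) * (\<integral>\<^sup>+x. ennreal (h x * exp (- g x)) \<partial>lborel)"
proof -
  define a where "a = (real DIM('a) + real k) / p"
  have "a > 0"
    using degree_pos by (simp add: a_def add_pos_nonneg)
  define G where "G = (\<integral>\<^sup>+x. ennreal (h x * g x * exp (- g x)) \<partial>lborel)"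
  have layer_cake: "AE x in lborel. ennreal (h x * exp (- g x))
      = (\<integral>\<^sup>+t. ennreal (h x * g x * exp (- t * g x)) * indicator {1..} t \<partial>lborel)"
    using AE_lborel_singleton[of 0]
    by eventually_elim (rule nn_integral_exp_tail[symmetric]; use h_nonneg positive in auto)
  have rescaled: "(\<integral>\<^sup>+x. ennreal (h x * g x * exp (- t * g x)) \<partial>lborel) = ennreal (t powr (- a - 1)) * G"
    if "t \<ge> 1" for t
  proof -
    have "pos_homogeneous (k + p) (\<lambda>x. h x * g x)"
      by (rule pos_homogeneous_mult[OF h homogeneous])
    then have "(\<integral>\<^sup>+x. ennreal (h x * g x * exp (- t * g x)) \<partial>lborel)
        = ennreal (t powr (- (real DIM('a) + real (k + p)) / p)) * G"
      using that unfolding G_def by (intro nn_integral_exp_scaled) auto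
    moreover have "- (real DIM('a) + real (k + p)) / p = - a - 1"
      using degree_pos by (simp add: a_def field_simps)
    ultimately show ?thesis by simp
  qed
  have "(\<integral>\<^sup>+x. ennreal (h x * exp (- g x)) \<partial>lborel)
      = (\<integral>\<^sup>+x. (\<integral>\<^sup>+t. ennreal (h x * g x * exp (- t * g x)) * indicator {1..} t \<partial>lborel) \<partial>lborel)"
    using layer_cake by (rule nn_integral_cong_AE)
  also have "\<dots> = (\<integral>\<^sup>+t. (\<integral>\<^sup>+x. ennreal (h x * g x * exp (- t * g x)) * indicator {1..} t \<partial>lborel) \<partial>lborel)"
    by (rule lborel_pair.Fubini'[symmetric]) (simp add: case_prod_unfold cong: measurable_cong_sets)
  also have "\<dots> = (\<integral>\<^sup>+t. ennreal (t powr (- a - 1)) * indicator {1..} t * G \<partial>lborel)"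
  proof (rule nn_integral_cong)
    fix t :: real
    show "(\<integral>\<^sup>+x. ennreal (h x * g x * exp (- t * g x)) * indicator {1..} t \<partial>lborel)
        = ennreal (t powr (- a - 1)) * indicator {1..} t * G"
      using rescaled[of t] by (cases "t \<ge> 1") (simp_all add: nn_integral_multc)
  qed
  also have "\<dots> = ennreal (1 / a) * G"
    using \<open>a > 0\<close> by (simp add: nn_integral_multc nn_integral_powr_tail)
  finally have "(\<integral>\<^sup>+x. ennreal (h x * exp (- g x)) \<partial>lborel) = ennreal (1 / a) * G" .
  then show ?thesis
    unfolding G_def[symmetric] a_def[symmetric]
    using \<open>a > 0\<close> by (simp add: mult.assoc[symmetric] flip: ennreal_mult)
qed

lemma integral_euler_nonneg:
  fixes h :: "'a \<Rightarrow> real"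
  assumes [measurable]: "h \<in> borel_measurable borel"
    and h: "pos_homogeneous k h" and h_nonneg: "\<And>x. h x \<ge> 0"
  shows "(\<integral>x. h x * g x * exp (- g x) \<partial>lborel)
       = (real DIM('a) + real k) / p * (\<integral>x. h x * exp (- g x) \<partial>lborel)"
  using nn_integral_euler[OF assms] h_nonneg nonneg
  by (subst (1 2) integral_eq_nn_integral) (auto simp: enn2real_mult)

lemma integrable_iff_integrable_mult:
  fixes h :: "'a \<Rightarrow> real"
  assumes [measurable]: "h \<in> borel_measurable borel" and h: "pos_homogeneous k h"
  shows "integrable lborel (\<lambda>x. h x * exp (- g x)) \<longleftrightarrow> integrable lborel (\<lambda>x. h x * g x * exp (- g x))"
proof -
  have "(\<integral>\<^sup>+x. ennreal (norm (h x * g x * exp (- g x))) \<partial>lborel)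
      = ennreal ((real DIM('a) + real k) / p) * (\<integral>\<^sup>+x. ennreal (norm (h x * exp (- g x))) \<partial>lborel)"
    using nn_integral_euler[of "\<lambda>x. \<bar>h x\<bar>" k] pos_homogeneous_abs[OF h] nonneg by (simp add: abs_mult)
  moreover have "(real DIM('a) + real k) / p > 0"
    using degree_pos by (simp add: add_pos_nonneg)
  ultimately show ?thesis
    by (auto simp: integrable_iff_bounded ennreal_mult_less_top)
qed

lemma integral_euler:
  fixes h :: "'a \<Rightarrow> real"
  assumes [measurable]: "h \<in> borel_measurable borel" and h: "pos_homogeneous k h"
    and integrable: "integrable lborel (\<lambda>x. h x * g x * exp (- g x))"
  shows "(\<integral>x. h x * g x * exp (- g x) \<partial>lborel)
       = (real DIM('a) + real k) / p * (\<integral>x. h x * exp (- g x) \<partial>lborel)"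
proof -
  define h_pos where "h_pos = (\<lambda>x. max (h x) 0)"
  define h_neg where "h_neg = (\<lambda>x. max (- h x) 0)"
  have [measurable]: "h_pos \<in> borel_measurable borel" "h_neg \<in> borel_measurable borel"
    by (simp_all add: h_pos_def h_neg_def)
  have hom: "pos_homogeneous k h_pos" "pos_homogeneous k h_neg"
    unfolding h_pos_def h_neg_def by (intro pos_homogeneous_max_0 pos_homogeneous_uminus h)+
  have h_split: "h x = h_pos x - h_neg x" for x
    by (simp add: h_pos_def h_neg_def max_def)
  have bound: "\<bar>h_pos x\<bar> \<le> \<bar>h x\<bar>" "\<bar>h_neg x\<bar> \<le> \<bar>h x\<bar>" for x
    by (simp_all add: h_pos_def h_neg_def)
  have int_mult: "integrable lborel (\<lambda>x. h_pos x * g x * exp (- g x))"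
    "integrable lborel (\<lambda>x. h_neg x * g x * exp (- g x))"
    by (auto intro!: Bochner_Integration.integrable_bound[OF integrable] AE_I2 mult_right_mono bound
        simp: abs_mult)
  then have int: "integrable lborel (\<lambda>x. h_pos x * exp (- g x))"
    "integrable lborel (\<lambda>x. h_neg x * exp (- g x))"
    using integrable_iff_integrable_mult[OF _ hom(1)] integrable_iff_integrable_mult[OF _ hom(2)] by auto
  have "(\<integral>x. h x * g x * exp (- g x) \<partial>lborel)
      = (\<integral>x. h_pos x * g x * exp (- g x) \<partial>lborel) - (\<integral>x. h_neg x * g x * exp (- g x) \<partial>lborel)"
    by (simp add: h_split left_diff_distrib int_mult)
  also have "\<dots> = (real DIM('a) + real k) / p
      * ((\<integral>x. h_pos x * exp (- g x) \<partial>lborel) - (\<integral>x. h_neg x * exp (- g x) \<partial>lborel))"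
    using integral_euler_nonneg[OF _ hom(1)] integral_euler_nonneg[OF _ hom(2)]
    by (simp add: h_pos_def h_neg_def right_diff_distrib)
  also have "(\<integral>x. h_pos x * exp (- g x) \<partial>lborel) - (\<integral>x. h_neg x * exp (- g x) \<partial>lborel)
      = (\<integral>x. h x * exp (- g x) \<partial>lborel)"
    by (simp add: h_split left_diff_distrib int)
  finally show ?thesis .
qed

lemma integral_sq_exp:
  "(\<integral>x. g x * g x * exp (- g x) \<partial>lborel)
     = (real DIM('a) + real p) * real DIM('a) / p\<^sup>2 * (\<integral>x. exp (- g x) \<partial>lborel)"
  using integral_euler_nonneg[of g p] integral_euler_nonneg[of "\<lambda>_. 1" 0]
  by (simp add: homogeneous nonneg pos_homogeneous_const power2_eq_square)

end

lemma integrable_weighted_mult: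
  fixes f h w :: "'a \<Rightarrow> real"
  assumes [measurable]: "f \<in> borel_measurable M" "h \<in> borel_measurable M" "w \<in> borel_measurable M"
    and w_nonneg: "\<And>x. w x \<ge> 0"
    and square_integrable: "integrable M (\<lambda>x. (f x)\<^sup>2 * w x)" "integrable M (\<lambda>x. (h x)\<^sup>2 * w x)"
  shows "integrable M (\<lambda>x. f x * h x * w x)"
proof (rule Bochner_Integration.integrable_bound[OF Bochner_Integration.integrable_add[OF square_integrable]])
  have "\<bar>f x * h x\<bar> \<le> (f x)\<^sup>2 + (h x)\<^sup>2" for x
  proof -
    have "2 * \<bar>f x\<bar> * \<bar>h x\<bar> \<le> (f x)\<^sup>2 + (h x)\<^sup>2"
      using sum_squares_bound[of "\<bar>f x\<bar>" "\<bar>h x\<bar>"] by simp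
    moreover have "0 \<le> \<bar>f x\<bar> * \<bar>h x\<bar>"
      by simp
    ultimately show ?thesis
      unfolding abs_mult by linarith
  qed
  then show "AE x in M. norm (f x * h x * w x) \<le> norm ((f x)\<^sup>2 * w x + (h x)\<^sup>2 * w x)"
    using w_nonneg by (auto simp: abs_mult distrib_right[symmetric] intro!: mult_right_mono)
qed simp

context
  fixes M :: "'a measure" and w :: "'a \<Rightarrow> real" and P :: "'i \<Rightarrow> 'a \<Rightarrow> real" and S :: "'i set"
  assumes finite_S: "finite S"
    and integrable_products: "\<And>\<alpha> \<beta>. \<alpha> \<in> S \<Longrightarrow> \<beta> \<in> S \<Longrightarrow> integrable M (\<lambda>x. P \<alpha> x * P \<beta> x * w x)"
    and orthonormal: "\<And>\<alpha> \<beta>. \<alpha> \<in> S \<Longrightarrow> \<beta> \<in> S \<Longrightarrow>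
      (\<integral>x. P \<alpha> x * P \<beta> x * w x \<partial>M) = (if \<alpha> = \<beta> then 1 else 0)"
begin

lemma orthonormal_coefficient:
  assumes "\<alpha> \<in> S" and f: "\<And>x. f x = (\<Sum>\<beta>\<in>S. c \<beta> * P \<beta> x)"
  shows "integrable M (\<lambda>x. P \<alpha> x * f x * w x)" and "(\<integral>x. P \<alpha> x * f x * w x \<partial>M) = c \<alpha>"
proof -
  have expand: "P \<alpha> x * f x * w x = (\<Sum>\<beta>\<in>S. c \<beta> * (P \<alpha> x * P \<beta> x * w x))" for x
    by (simp add: f sum_distrib_left sum_distrib_right mult_ac)
  show "integrable M (\<lambda>x. P \<alpha> x * f x * w x)"
    unfolding expand using \<open>\<alpha> \<in> S\<close> integrable_products by auto
  have "(\<integral>x. P \<alpha> x * f x * w x \<partial>M) = (\<Sum>\<beta>\<in>S. c \<beta> * (if \<alpha> = \<beta> then 1 else 0))"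
    unfolding expand using \<open>\<alpha> \<in> S\<close> integrable_products orthonormal by simp
  also have "\<dots> = c \<alpha>"
    using finite_S \<open>\<alpha> \<in> S\<close> by (simp add: if_distrib sum.delta cong: if_cong)
  finally show "(\<integral>x. P \<alpha> x * f x * w x \<partial>M) = c \<alpha>" .
qed

lemma orthonormal_parseval:
  assumes f: "\<And>x. f x = (\<Sum>\<alpha>\<in>S. c \<alpha> * P \<alpha> x)"
  shows "integrable M (\<lambda>x. f x * f x * w x)" and "(\<integral>x. f x * f x * w x \<partial>M) = (\<Sum>\<alpha>\<in>S. (c \<alpha>)\<^sup>2)"
proof -
  have expand: "f x * f x * w x = (\<Sum>\<alpha>\<in>S. c \<alpha> * (P \<alpha> x * f x * w x))" for x
    by (subst (1) f) (simp add: sum_distrib_left sum_distrib_right mult_ac)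
  show "integrable M (\<lambda>x. f x * f x * w x)"
    unfolding expand using orthonormal_coefficient(1)[OF _ f] by auto
  show "(\<integral>x. f x * f x * w x \<partial>M) = (\<Sum>\<alpha>\<in>S. (c \<alpha>)\<^sup>2)"
    unfolding expand using orthonormal_coefficient[OF _ f] by (simp add: power2_eq_square)
qed

end

lemma orthonormal_form_basisD:
  assumes basis: "orthonormal_form_basis k g P" and [measurable]: "g \<in> borel_measurable borel"
    and "\<alpha> \<in> exps k" "\<beta> \<in> exps k"
  shows "pos_homogeneous k (P \<alpha>)" and "P \<alpha> \<in> borel_measurable borel"
    and "integrable lborel (\<lambda>x. P \<alpha> x * P \<beta> x * exp (- g x))"
    and "(\<integral>x. P \<alpha> x * P \<beta> x * exp (- g x) \<partial>lborel) = (if \<alpha> = \<beta> then 1 else 0)"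
proof -
  have [measurable]: "P \<alpha> \<in> borel_measurable borel" "P \<beta> \<in> borel_measurable borel"
    using basis assms(3,4) by (auto simp: orthonormal_form_basis_def is_form_borel_measurable)
  then show "P \<alpha> \<in> borel_measurable borel" by simp
  show "pos_homogeneous k (P \<alpha>)"
    using basis assms(3) by (simp add: orthonormal_form_basis_def is_form_pos_homogeneous)
  show "integrable lborel (\<lambda>x. P \<alpha> x * P \<beta> x * exp (- g x))"
    using basis assms(3,4) by (intro integrable_weighted_mult) (auto simp: orthonormal_form_basis_def)
  show "(\<integral>x. P \<alpha> x * P \<beta> x * exp (- g x) \<partial>lborel) = (if \<alpha> = \<beta> then 1 else 0)"
    using basis assms(3,4) by (simp add: orthonormal_form_basis_def L2_inner_def)
qed

theorem corollary2p3:
  fixes g :: "real^'d::finite \<Rightarrow> real"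
    and n :: nat
    and P :: "('d \<Rightarrow> nat) \<Rightarrow> real^'d \<Rightarrow> real"
    and gt :: "('d \<Rightarrow> nat) \<Rightarrow> real"
  assumes "n \<ge> 1"
    and "is_form (2*n) g"
    and "\<forall>x. g x \<ge> 0"
    and "\<forall>x. g x = 0 \<longrightarrow> x = 0"
    and "orthonormal_form_basis (2*n) g P"
    and "g = (\<lambda>x. \<Sum>\<alpha>\<in>exps (2*n). gt \<alpha> * P \<alpha> x)"
  shows "Zg g = (4 * real n ^ 2) / (real CARD('d) * (real CARD('d) + 2 * real n))
                  * (\<Sum>\<alpha>\<in>exps (2*n). (gt \<alpha>)\<^sup>2)
       \<and> Zg g = (real CARD('d) + 2 * real n) / real CARD('d)
                  * (\<Sum>\<alpha>\<in>exps (2*n). (\<integral>x. P \<alpha> x * exp (- g x) \<partial>lborel)\<^sup>2)"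
proof -
  let ?S = "exps (2*n) :: ('d \<Rightarrow> nat) set" and ?d = "real CARD('d)"
  interpret homogeneous_potential g "2*n"
    using assms(1-4) by unfold_locales
      (auto simp: is_form_pos_homogeneous is_form_borel_measurable order.strict_iff_order)
  note basis = orthonormal_form_basisD[OF assms(5) borel_measurable_g]
  have expansion: "\<And>x. g x = (\<Sum>\<alpha>\<in>?S. gt \<alpha> * P \<alpha> x)"
    using assms(6) by metis
  note parseval = orthonormal_parseval[OF finite_exps basis(3,4) expansion]
  note coefficient = orthonormal_coefficient[OF finite_exps basis(3,4) _ expansion]
  define e where "e = ?d + 2 * real n"
  have nonzero: "?d \<noteq> 0" "e \<noteq> 0" "real n \<noteq> 0"
    using assms(1) by (simp_all add: e_def add_pos_nonneg)
  have norm_gt: "(\<Sum>\<alpha>\<in>?S. (gt \<alpha>)\<^sup>2) = e * ?d / (2 * real n)\<^sup>2 * Zg g"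
    using parseval(2) integral_sq_exp by (simp add: Zg_def e_def)
  have "gt \<alpha> = e / (2 * real n) * (\<integral>x. P \<alpha> x * exp (- g x) \<partial>lborel)" if "\<alpha> \<in> ?S" for \<alpha>
    using integral_euler[OF basis(2,1) coefficient(1)] coefficient(2) that by (simp add: e_def)
  then have moment: "(\<integral>x. P \<alpha> x * exp (- g x) \<partial>lborel) = 2 * real n / e * gt \<alpha>" if "\<alpha> \<in> ?S" for \<alpha>
    using nonzero that by (simp add: field_simps)
  have "(\<Sum>\<alpha>\<in>?S. (\<integral>x. P \<alpha> x * exp (- g x) \<partial>lborel)\<^sup>2) = (2 * real n / e)\<^sup>2 * (\<Sum>\<alpha>\<in>?S. (gt \<alpha>)\<^sup>2)"
    unfolding sum_distrib_left by (intro sum.cong refl) (simp add: moment power_mult_distrib power_divide)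
  with norm_gt nonzero show ?thesis
    unfolding e_def[symmetric] by (simp add: field_simps power2_eq_square)
qed

end
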